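(* Let $k$ be a positive integer with $4\mid k$. Then $S_3(k;4)\ge 4k-5$.
   Context: Let $k,r$ be positive integers with $r\mid k$. A solution to $\mathcal{E}$ is a $k$-tuple $(x_1,\dots,x_k)$ of positive integers (not necessarily distinct) with $\sum_{i=1}^{k-1}x_i=x_k$; it lies in $[1,n]$ if all $x_i\in\{1,\dots,n\}$. Given a coloring $\chi$ of $[1,n]$ with colors in $\{0,1,\dots,r-1\}$ (viewed as integers), a solution is $r$-zero-sum if $\sum_{i=1}^k\chi(x_i)\equiv 0\pmod r$. $S_3(k;r)$ denotes the least positive integer $n$ such that every coloring $\chi:[1,n]\to\{0,1,\dots,r-1\}$ admits an $r$-zero-sum solution to $\mathcal{E}$ in $[1,n]$. *)

theory Defs
  imports Main
begin

definition is_solution :: "nat \<Rightarrow> nat \<Rightarrow> (nat \<Rightarrow> nat) \<Rightarrow> bool" where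
  "is_solution k n x \<longleftrightarrow> (\<forall>i\<in>{1..k}. x i \<in> {1..n}) \<and> (\<Sum>i=1..k-1. x i) = x k"

definition zero_sum :: "nat \<Rightarrow> nat \<Rightarrow> (nat \<Rightarrow> nat) \<Rightarrow> (nat \<Rightarrow> nat) \<Rightarrow> bool" where
  "zero_sum k r chi x \<longleftrightarrow> (\<Sum>i=1..k. chi (x i)) mod r = 0"

definition zs_property :: "nat \<Rightarrow> nat \<Rightarrow> nat \<Rightarrow> bool" where
  "zs_property k r n \<longleftrightarrow>
     (\<forall>chi :: nat \<Rightarrow> nat. (\<forall>i\<in>{1..n}. chi i < r) \<longrightarrow>
        (\<exists>x. is_solution k n x \<and> zero_sum k r chi x))"

definition S3 :: "nat \<Rightarrow> nat \<Rightarrow> nat" where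
  "S3 k r = (LEAST n. 0 < n \<and> zs_property k r n)"

end

theory Submission
  imports Defs
begin

text \<open>Colour y \<le> k - 2 by y mod 4 and y \<ge> k - 1 by (c y - y) mod 4, where c is
  tail_offset k. For a solution x_1 + ... + x_(k-1) = s every summand y then contributes y plus a
  defect (2 for even y in [k, 2k-3], 1 for y in [2k-2, 3k-4], 0 otherwise) and s contributes
  c s - s, so the colour sum is congruent to c s plus the total defect. Since the x_i - 1 add
  up to s - (k - 1) \<le> 3k - 5, summands with a defect are scarce and force s up, and a short
  case analysis on c s shows that the residue never vanishes.\<close>

definition tail_offset :: "nat \<Rightarrow> nat \<Rightarrow> nat" where
  "tail_offset k y =
     (if y \<le> 2*k - 3 then 2 else if y \<le> 3*k - 4 then (if even y then 1 else 3) else 1)"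

text \<open>Over nat, -y is represented by 3y modulo 4.\<close>
definition coloring :: "nat \<Rightarrow> nat \<Rightarrow> nat" where
  "coloring k y = (if y \<le> k - 2 then y else tail_offset k y + 3*y) mod 4"

definition second_block_evens :: "nat \<Rightarrow> nat set" where
  "second_block_evens k = {y. even y \<and> k \<le> y \<and> y \<le> 2*k - 3}"

definition third_block :: "nat \<Rightarrow> nat set" where
  "third_block k = {2*k - 2..3*k - 4}"

definition summands_in :: "nat \<Rightarrow> (nat \<Rightarrow> nat) \<Rightarrow> nat set \<Rightarrow> nat" where
  "summands_in k x A = card {i \<in> {1..k-1}. x i \<in> A}"

lemma summands_in_eq_sum: "summands_in k x A = (\<Sum>i=1..k-1. of_bool (x i \<in> A))"
  by (simp add: summands_in_def Int_def)

lemma coloring_less_4: "coloring k y < 4"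
  by (simp add: coloring_def)

lemma coloring_eq_defect:
  assumes "even k" "2 \<le> k" "y \<le> 3*k - 4"
  shows "coloring k y =
    (y + 2 * of_bool (y \<in> second_block_evens k) + of_bool (y \<in> third_block k)) mod 4"
proof -
  consider "y \<le> k - 2" | "k - 1 \<le> y" "y \<le> 2*k - 3" | "2*k - 2 \<le> y" "y \<le> 3*k - 4"
    using assms(3) by linarith
  then show ?thesis
  proof cases
    case 1
    then have "y \<notin> second_block_evens k" "y \<notin> third_block k"
      using assms(2) by (auto simp: second_block_evens_def third_block_def)
    then show ?thesis using 1 by (simp add: coloring_def)
  next
    case 2
    have "odd (k - 1)" using \<open>even k\<close> assms(2) by simp
    then have "even y \<longleftrightarrow> y \<in> second_block_evens k"
      using 2 by (auto simp: second_block_evens_def dest: le_neq_implies_less)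
    moreover have "(2 + 3*y) mod 4 = (y + 2 * of_bool (even y)) mod 4"
      by (cases "even y") (simp_all, presburger+)
    moreover have "y \<notin> third_block k" using 2 assms(2) by (auto simp: third_block_def)
    ultimately show ?thesis using 2 assms(2) by (simp add: coloring_def tail_offset_def)
  next
    case 3
    have "((if even y then 1 else 3) + 3*y) mod 4 = (y + 1) mod 4"
      by (cases "even y") (simp_all, presburger+)
    then show ?thesis using 3 assms(2)
      by (simp add: coloring_def tail_offset_def second_block_evens_def third_block_def)
  qed
qed

lemma defect_weight_le:
  assumes "2 \<le> k"
  shows "(k - 1) * of_bool (y \<in> second_block_evens k) + (2*k - 3) * of_bool (y \<in> third_block k)
    \<le> y - 1"
  using assms by (auto simp: second_block_evens_def third_block_def)

lemma solution_excess_sum: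
  assumes "is_solution k n x"
  shows "(\<Sum>i=1..k-1. x i - 1) + (k - 1) = x k"
proof -
  have "x i = (x i - 1) + 1" if "i \<in> {1..k-1}" for i
  proof -
    have "i \<in> {1..k}" using that by auto
    then have "1 \<le> x i" using assms by (simp add: is_solution_def)
    then show ?thesis by simp
  qed
  then have "(\<Sum>i=1..k-1. x i) = (\<Sum>i=1..k-1. (x i - 1) + 1)"
    by (rule sum.cong[OF refl])
  also have "\<dots> = (\<Sum>i=1..k-1. x i - 1) + (k - 1)"
    unfolding sum.distrib by simp
  finally show ?thesis using assms by (simp add: is_solution_def)
qed

lemma solution_summand_le:
  assumes "is_solution k n x" "i \<in> {1..k-1}"
  shows "x i - 1 + (k - 1) \<le> x k"
  using member_le_sum[OF assms(2), of "\<lambda>i. x i - 1"] solution_excess_sum[OF assms(1)] by simp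

lemma solution_defect_weight_le:
  assumes "is_solution k n x" "2 \<le> k"
  shows "(k - 1) * summands_in k x (second_block_evens k)
    + (2*k - 3) * summands_in k x (third_block k) + (k - 1) \<le> x k"
proof -
  have "(k - 1) * summands_in k x (second_block_evens k)
      + (2*k - 3) * summands_in k x (third_block k)
    = (\<Sum>i=1..k-1. (k - 1) * of_bool (x i \<in> second_block_evens k)
      + (2*k - 3) * of_bool (x i \<in> third_block k))"
    by (simp add: summands_in_eq_sum sum.distrib sum_distrib_left del: sum_of_bool_eq)
  also have "\<dots> \<le> (\<Sum>i=1..k-1. x i - 1)"
    by (intro sum_mono defect_weight_le assms(2))
  finally show ?thesis using solution_excess_sum[OF assms(1)] by linarith
qed

lemma coloring_sum_mod_4:
  assumes "even k" "2 \<le> k" "is_solution k n x" "x k \<le> 4*k - 6"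
  shows "(\<Sum>i=1..k. coloring k (x i)) mod 4 =
    (2 * summands_in k x (second_block_evens k) + summands_in k x (third_block k)
      + tail_offset k (x k)) mod 4"
proof -
  let ?e = "summands_in k x (second_block_evens k)" and ?b = "summands_in k x (third_block k)"
  let ?defect = "\<lambda>y. 2 * of_bool (y \<in> second_block_evens k) + of_bool (y \<in> third_block k)"
  have summand_le: "x i \<le> 3*k - 4" if "i \<in> {1..k-1}" for i
    using solution_summand_le[OF assms(3) that] assms(2,4) by linarith
  have "(\<Sum>i=1..k-1. coloring k (x i)) = (\<Sum>i=1..k-1. (x i + ?defect (x i)) mod 4)"
    using coloring_eq_defect[OF assms(1,2)] summand_le by (intro sum.cong) (simp_all add: add.assoc)
  moreover have "(\<Sum>i=1..k-1. x i + ?defect (x i)) = x k + 2*?e + ?b"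
    using assms(3) unfolding summands_in_eq_sum
    by (simp add: sum.distrib sum_distrib_left is_solution_def del: sum_of_bool_eq)
  ultimately have summands: "(\<Sum>i=1..k-1. coloring k (x i)) mod 4 = (x k + 2*?e + ?b) mod 4"
    by (simp only: mod_sum_eq)
  have "k - 1 \<le> x k" using solution_excess_sum[OF assms(3)] by linarith
  then have last: "coloring k (x k) = (tail_offset k (x k) + 3 * x k) mod 4"
    using assms(2) by (simp add: coloring_def)
  obtain m where "k = Suc m" using assms(2) by (cases k) auto
  then have "(\<Sum>i=1..k. coloring k (x i)) mod 4
      = ((\<Sum>i=1..k-1. coloring k (x i)) mod 4 + coloring k (x k)) mod 4"
    by (simp add: mod_add_left_eq)
  also have "\<dots> = ((x k + 2*?e + ?b) mod 4 + (tail_offset k (x k) + 3 * x k) mod 4) mod 4"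
    by (simp only: summands last)
  also have "\<dots> = (2*?e + ?b + tail_offset k (x k) + 4 * x k) mod 4"
    by (simp add: mod_add_eq algebra_simps)
  finally show ?thesis by simp
qed

lemma defect_sum_mod_4_nonzero:
  fixes k s e b :: nat
  assumes "4 dvd k" "4 \<le> k"
    and weight: "(k - 1) * e + (2*k - 3) * b + (k - 1) \<le> s" and "s \<le> 4*k - 6"
  shows "(2*e + b + tail_offset k s) mod 4 \<noteq> 0"
proof -
  have "even k" using \<open>4 dvd k\<close> by (auto elim: dvdE)
  have e_weight: "k - 1 \<le> (k - 1) * e" if "e \<noteq> 0" using that by simp
  have "b \<le> 1"
  proof (rule ccontr)
    assume "\<not> b \<le> 1"
    then have "2 * (2*k - 3) \<le> (2*k - 3) * b" by simp
    then show False using weight \<open>s \<le> 4*k - 6\<close> \<open>4 \<le> k\<close> by linarith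
  qed
  show ?thesis
  proof (cases "b = 0")
    case b0: True
    show ?thesis
    proof (cases "e = 0")
      case True
      then show ?thesis using b0 by (simp add: tail_offset_def)
    next
      case False
      then have "2*k - 2 \<le> s" using e_weight weight by linarith
      then have "odd (tail_offset k s)" using \<open>4 \<le> k\<close> by (simp add: tail_offset_def)
      then have "odd (2*e + b + tail_offset k s)" using b0 by simp
      then show ?thesis by (metis dvd_mod_iff dvd_0_right even_numeral)
    qed
  next
    case False
    with \<open>b \<le> 1\<close> have "b = 1" by simp
    then have "(k - 1) * e + (2*k - 3) + (k - 1) \<le> s" using weight by simp
    then have "e = 0" using e_weight \<open>s \<le> 4*k - 6\<close> \<open>4 \<le> k\<close> by (cases "e = 0") linarith+
    then have "3*k - 4 \<le> s" using weight \<open>b = 1\<close> \<open>4 \<le> k\<close> by simp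
    moreover have "even (3*k - 4)" using \<open>even k\<close> \<open>4 \<le> k\<close> by simp
    ultimately have "tail_offset k s = 1" using \<open>4 \<le> k\<close> by (auto simp: tail_offset_def)
    then show ?thesis using \<open>b = 1\<close> \<open>e = 0\<close> by simp
  qed
qed

lemma coloring_no_zero_sum_solution:
  assumes "4 dvd k" "0 < k" "is_solution k n x" "n \<le> 4*k - 6"
  shows "\<not> zero_sum k 4 (coloring k) x"
proof -
  have "4 \<le> k" using assms(1,2) by (simp add: dvd_imp_le)
  have "even k" using assms(1) by (auto elim: dvdE)
  have "x k \<le> n" using assms(2,3) by (simp add: is_solution_def)
  then show ?thesis
    using coloring_sum_mod_4[OF \<open>even k\<close> _ assms(3)] \<open>4 \<le> k\<close> assms(4)
      defect_sum_mod_4_nonzero[OF assms(1) \<open>4 \<le> k\<close> solution_defect_weight_le[OF assms(3)]]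
    by (simp add: zero_sum_def)
qed

theorem theorem6:
  fixes k :: nat
  assumes "0 < k" and "4 dvd k"
  shows "\<forall>n. 0 < n \<and> zs_property k 4 n \<longrightarrow> 4 * k - 5 \<le> n"
proof (intro allI impI)
  fix n
  assume "0 < n \<and> zs_property k 4 n"
  then obtain x where "is_solution k n x" "zero_sum k 4 (coloring k) x"
    using coloring_less_4 unfolding zs_property_def by blast
  then show "4 * k - 5 \<le> n"
    using coloring_no_zero_sum_solution[OF assms(2,1)] by fastforce
qed

end
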